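(* The set of points of exact period $2$ under $G$ lies on the line $u=-1$, and the Zariski closure in $\mathbb{C}^2$ of this set is the line $u=-1$ (the equation of period two orbits on the $(u,v)$-plane is $u=-1$).
   Context: Let \[ G(u,v)=\left(\frac{-u+v+uv}{u},\ \frac{u^{2}-u+v-u^{2}v-uv+uv^{2}+v^{2}}{u}\right), \] defined for $(u,v)\in\mathbb{C}^2$ with $u\neq 0$. A point $(u,v)$ has exact period $n$ under $G$ if the iterates $G^k(u,v)$, $0\le k\le n-1$, all have nonzero first coordinate, $G^n(u,v)=(u,v)$, and $G^k(u,v)\neq(u,v)$ for $0<k<n$. *)

theory Defs
  imports Complex_Main "HOL-Computational_Algebra.Polynomial"
begin

definition G :: "complex \<times> complex \<Rightarrow> complex \<times> complex" where
  "G = (\<lambda>(u, v). ((- u + v + u * v) / u,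
        (u^2 - u + v - u^2 * v - u * v + u * v^2 + v^2) / u))"

definition exact_period :: "nat \<Rightarrow> complex \<times> complex \<Rightarrow> bool" where
  "exact_period n p \<longleftrightarrow>
     (\<forall>k<n. fst ((G ^^ k) p) \<noteq> 0) \<and> (G ^^ n) p = p \<and>
     (\<forall>k. 0 < k \<and> k < n \<longrightarrow> (G ^^ k) p \<noteq> p)"

text \<open>Bivariate complex polynomials are represented as polynomials in u whose
  coefficients are polynomials in v; evaluation at (u,v).\<close>
definition eval2 :: "complex poly poly \<Rightarrow> complex \<times> complex \<Rightarrow> complex" where
  "eval2 f z = poly (poly (map_poly (\<lambda>c. [:poly c (snd z):]) f) [:fst z:]) 0"

definition zariski_closure :: "(complex \<times> complex) set \<Rightarrow> (complex \<times> complex) set" where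
  "zariski_closure S = {z. \<forall>f. (\<forall>w\<in>S. eval2 f w = 0) \<longrightarrow> eval2 f z = 0}"

end

theory Submission
  imports Defs
begin

text \<open>Clearing the denominators in G \<circ> G = id and eliminating the image point (a, b) leaves
  the factorisation (v - u) (v + 1) ((u + 1) v - u) = 0 off the line u = -1; each factor forces
  a fixed point or a zero first coordinate. On the line, G acts as the involution
  v \<mapsto> -2 - v, whose only fixed point is v = -1. So the period-2 points are the line minus a
  point, whose Zariski closure is the whole line because a nonzero polynomial in v has only
  finitely many roots.\<close>

lemma eval2_eq_poly_poly: "eval2 f (x, y) = poly (poly f [:x:]) y"
proof (induction f)
  case 0
  then show ?case by (simp add: eval2_def)
next
  case (pCons a p)
  have "eval2 (pCons a p) (x, y) = poly a y + x * eval2 p (x, y)"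
    by (simp add: eval2_def map_poly_pCons poly_0_coeff_0)
  then show ?case using pCons by (simp add: algebra_simps)
qed

lemma zariski_closure_subset_zeros:
  assumes "\<forall>w\<in>S. eval2 f w = 0"
  shows "zariski_closure S \<subseteq> {z. eval2 f z = 0}"
  using assms unfolding zariski_closure_def by blast

lemma poly_eq_0_if_cofinite_roots:
  fixes p :: "'a::{idom, ring_char_0} poly"
  assumes "finite F" and "\<And>x. x \<notin> F \<Longrightarrow> poly p x = 0"
  shows "p = 0"
proof (rule ccontr)
  assume "p \<noteq> 0"
  then have "finite {x. poly p x = 0}" by (rule poly_roots_finite)
  moreover have "UNIV \<subseteq> F \<union> {x. poly p x = 0}" using assms(2) by auto
  ultimately have "finite (UNIV :: 'a set)" using assms(1) by (meson finite_UnI finite_subset)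
  then show False by (simp add: infinite_UNIV_char_0)
qed

lemma zariski_closure_vertical_line_minus_finite:
  assumes "finite F"
  shows "zariski_closure {p. fst p = c \<and> snd p \<notin> F} = {p. fst p = c}"
proof (intro equalityI subsetI)
  fix z assume z: "z \<in> zariski_closure {p. fst p = c \<and> snd p \<notin> F}"
  have ev: "eval2 [:[:- c:], [:1:]:] w = fst w - c" for w
    using eval2_eq_poly_poly[of _ "fst w" "snd w"] by simp
  show "z \<in> {p. fst p = c}"
    using zariski_closure_subset_zeros[of "{p. fst p = c \<and> snd p \<notin> F}" "[:[:- c:], [:1:]:]"] z
    by (auto simp: ev)
next
  fix z :: "complex \<times> complex" assume "z \<in> {p. fst p = c}"
  then obtain y where z: "z = (c, y)" by (cases z) auto
  show "z \<in> zariski_closure {p. fst p = c \<and> snd p \<notin> F}"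
    unfolding zariski_closure_def
  proof (intro CollectI allI impI)
    fix f assume "\<forall>w\<in>{p. fst p = c \<and> snd p \<notin> F}. eval2 f w = 0"
    then have "poly (poly f [:c:]) v = 0" if "v \<notin> F" for v
      using that eval2_eq_poly_poly[of f c v] by simp
    then have "poly f [:c:] = 0" by (rule poly_eq_0_if_cofinite_roots[OF assms])
    then show "eval2 f z = 0" by (simp add: z eval2_eq_poly_poly)
  qed
qed

lemma G_eq_iff:
  assumes "u \<noteq> 0"
  shows "G (u, v) = (a, b) \<longleftrightarrow>
    a * u = - u + v + u * v \<and> b * u = u^2 - u + v - u^2 * v - u * v + u * v^2 + v^2"
  using assms by (auto simp: G_def field_simps)

lemma G_on_line: "G (-1, v) = (-1, -2 - v)"
  by (simp add: G_def power2_eq_square algebra_simps)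

lemma exact_period_2_iff:
  "exact_period 2 p \<longleftrightarrow> fst p \<noteq> 0 \<and> fst (G p) \<noteq> 0 \<and> G (G p) = p \<and> G p \<noteq> p"
proof -
  have "(\<forall>k<(2::nat). P k) \<longleftrightarrow> P 0 \<and> P 1" for P
    by (auto simp: less_2_cases_iff)
  moreover have "(\<forall>k. 0 < k \<and> k < (2::nat) \<longrightarrow> Q k) \<longleftrightarrow> Q 1" for Q
    using less_2_cases_iff by auto
  ultimately show ?thesis unfolding exact_period_def by (simp add: numeral_2_eq_2)
qed

lemma two_cycle_on_line:
  assumes "u \<noteq> 0" "a \<noteq> 0" "G (u, v) = (a, b)" "G (a, b) = (u, v)" "(a, b) \<noteq> (u, v)"
  shows "u = -1"
proof (rule ccontr)
  have e1: "a * u = - u + v + u * v"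
    and e2: "b * u = u^2 - u + v - u^2 * v - u * v + u * v^2 + v^2"
    using G_eq_iff[OF assms(1)] assms(3) by auto
  have e3: "a * u = - a + b + a * b"
    and e4: "a * v = a^2 - a + b - a^2 * b - a * b + a * b^2 + b^2"
    using G_eq_iff[OF assms(2)] assms(4) by (auto simp: mult.commute)
  assume "u \<noteq> -1"
  then have u1: "u + 1 \<noteq> 0" by (metis add_eq_0_iff2)
  have "b * v * (u + 1) = (v * (u + 1) - u) * (u + 1)" using e1 e3 assms(1) by algebra
  then have bv: "b * v = v * (u + 1) - u" using u1 by simp
  have "(v - u) * (v + 1) * ((u + 1) * v - u) = 0" using bv e2 by algebra
  then consider "v = u" | "v = -1" | "(u + 1) * v = u"
    by (metis add_eq_0_iff2 mult_eq_0_iff eq_iff_diff_eq_0)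
  then show False
  proof cases
    case 1
    have "a * u = u * u" "b * u = u * u" using e1 e2 1 by algebra+
    then show False using assms(1,5) 1 by simp
  next
    case 2
    have "b * u = (1 + 2 * u) * u" using e2 2 by algebra
    then have b: "b = 1 + 2 * u" using assms(1) by simp
    have "(u + 1)^2 * (2 * u + 1) = 0" using e1 e4 b 2 by algebra
    moreover have "2 * u + 1 \<noteq> 0" using e1 2 assms(1,2) by algebra
    ultimately show False using u1 by simp
  next
    case 3
    have "a * u = 0" using e1 3 by algebra
    then show False using assms(1,2) by simp
  qed
qed

lemma exact_period_2_iff_on_line:
  "exact_period 2 p \<longleftrightarrow> fst p = -1 \<and> snd p \<noteq> -1"
proof
  assume p: "exact_period 2 p"
  obtain u v a b where uv: "p = (u, v)" and ab: "G (u, v) = (a, b)"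
    by (metis prod.exhaust)
  have "fst p = -1"
    using p two_cycle_on_line[OF _ _ ab] unfolding exact_period_2_iff uv ab by auto
  moreover have "snd p \<noteq> -1"
    using p calculation G_on_line[of "-1"] unfolding exact_period_2_iff uv by auto
  ultimately show "fst p = -1 \<and> snd p \<noteq> -1" ..
next
  assume "fst p = -1 \<and> snd p \<noteq> -1"
  then obtain v where p: "p = (-1, v)" and v: "v \<noteq> -1" by (cases p) auto
  have "-2 - v \<noteq> v" using v by (auto simp: algebra_simps)
  then show "exact_period 2 p" unfolding exact_period_2_iff p G_on_line by simp
qed

theorem mainTheorem4:
  shows "{p. exact_period 2 p} \<subseteq> {p. fst p = -1} \<and>
         zariski_closure {p. exact_period 2 p} = {p. fst p = -1}"
proof -
  have "{p. exact_period 2 p} = {p. fst p = -1 \<and> snd p \<notin> {-1}}"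
    using exact_period_2_iff_on_line by auto
  then show ?thesis using zariski_closure_vertical_line_minus_finite[of "{-1}" "-1"] by auto
qed

end
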